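(* Let $(X,\rho)$ be a separable metric space, $\mu$ a measure on $X$, and $\delta:\mathrm{Lip}_b(X)\to L^\infty(X,\mu)$ a linear operator. (1) If $\delta\in\Upsilon(X,\mu)$, then $\delta$ is a bounded operator (from $(\mathrm{Lip}_b(X),\|\cdot\|_{\mathrm{Lip}})$ to $L^\infty(X,\mu)$). (2) $\delta\in\Upsilon(X,\mu)$ if and only if $\delta$ satisfies the Leibniz rule and is sequentially weak-* continuous, i.e. $f_i\to f$ weak-* in $\mathrm{Lip}_b(X)$ for a sequence implies $\delta f_i\to\delta f$ weak-* in $L^\infty(X,\mu)$.
   Context: $\mathrm{Lip}_b(X)$ is the Banach space of bounded Lipschitz functions with norm $\|f\|_{\mathrm{Lip}}=\max(\sup|f|,L(f))$, $L(f)$ the Lipschitz constant. It is a dual Banach space (its predual is an Arens–Eells type space), and a bounded net converges weak-* in $\mathrm{Lip}_b(X)$ iff it converges pointwise. A derivation is a linear map $\delta:\mathrm{Lip}_b(X)\to L^\infty(X,\mu)$ satisfying the Leibniz rule $\delta(fg)=f\delta g+g\delta f$ and such that whenever $(f_\alpha)$ is a bounded net with $f_\alpha\to f$ weak-* in $\mathrm{Lip}_b(X)$, then $\delta f_\alpha\to\delta f$ weak-* in $L^\infty(X,\mu)$. $\Upsilon(X,\mu)$ is the set of derivations. *)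

theory Defs
  imports "HOL-Analysis.Analysis" "HOL-Probability.Probability"
begin

definition lipb :: "('a::metric_space \<Rightarrow> real) set" where
  "lipb = {f. bounded (range f) \<and> (\<exists>C. \<forall>x y. \<bar>f x - f y\<bar> \<le> C * dist x y)}"

definition lip_const :: "('a::metric_space \<Rightarrow> real) \<Rightarrow> real" where
  "lip_const f = Sup ({0} \<union> {\<bar>f x - f y\<bar> / dist x y | x y. x \<noteq> y})"

definition lip_norm :: "('a::metric_space \<Rightarrow> real) \<Rightarrow> real" where
  "lip_norm f = max (SUP x. \<bar>f x\<bar>) (lip_const f)"

text \<open>Weak-* convergence in Lip_b(X) of a bounded net, with nets encoded as filters
  on Lip_b(X): by the standing fact, a bounded net converges weak-* iff it converges
  pointwise.\<close>
definition lip_bounded_wstar :: "('a::metric_space \<Rightarrow> real) filter \<Rightarrow> ('a \<Rightarrow> real) \<Rightarrow> bool" where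
  "lip_bounded_wstar F f \<longleftrightarrow>
     f \<in> lipb \<and> (\<exists>B. eventually (\<lambda>g. g \<in> lipb \<and> lip_norm g \<le> B) F) \<and>
     (\<forall>x. ((\<lambda>g. g x) \<longlongrightarrow> f x) F)"

text \<open>Weak-* convergence in L^\<infinity>(X,\<mu>) = (L^1(X,\<mu>))^* (\<mu> \<sigma>-finite), of the filter-indexed family \<open>\<lambda>i. u i\<close>.\<close>
definition linf_wstar :: "'a measure \<Rightarrow> ('i \<Rightarrow> 'a \<Rightarrow> real) \<Rightarrow> ('a \<Rightarrow> real) \<Rightarrow> 'i filter \<Rightarrow> bool" where
  "linf_wstar M u v F \<longleftrightarrow>
     (\<forall>h. integrable M h \<longrightarrow>
        ((\<lambda>i. integral\<^sup>L M (\<lambda>x. u i x * h x)) \<longlongrightarrow> integral\<^sup>L M (\<lambda>x. v x * h x)) F)"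

definition linf :: "'a measure \<Rightarrow> ('a \<Rightarrow> real) set" where
  "linf M = {g. g \<in> borel_measurable M \<and> (\<exists>C. AE x in M. \<bar>g x\<bar> \<le> C)}"

definition linf_linear_op :: "'a::metric_space measure \<Rightarrow> (('a \<Rightarrow> real) \<Rightarrow> ('a \<Rightarrow> real)) \<Rightarrow> bool" where
  "linf_linear_op M \<delta> \<longleftrightarrow>
     (\<forall>f\<in>lipb. \<delta> f \<in> linf M) \<and>
     (\<forall>f\<in>lipb. \<forall>g\<in>lipb. \<forall>a b::real.
        AE x in M. \<delta> (\<lambda>y. a * f y + b * g y) x = a * \<delta> f x + b * \<delta> g x)"

definition leibniz :: "'a::metric_space measure \<Rightarrow> (('a \<Rightarrow> real) \<Rightarrow> ('a \<Rightarrow> real)) \<Rightarrow> bool" where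
  "leibniz M \<delta> \<longleftrightarrow>
     (\<forall>f\<in>lipb. \<forall>g\<in>lipb. AE x in M. \<delta> (\<lambda>y. f y * g y) x = f x * \<delta> g x + g x * \<delta> f x)"

definition derivation :: "'a::metric_space measure \<Rightarrow> (('a \<Rightarrow> real) \<Rightarrow> ('a \<Rightarrow> real)) \<Rightarrow> bool" where
  "derivation M \<delta> \<longleftrightarrow> linf_linear_op M \<delta> \<and> leibniz M \<delta> \<and>
     (\<forall>F f. lip_bounded_wstar F f \<longrightarrow> linf_wstar M \<delta> (\<delta> f) F)"

text \<open>Weak-* convergence of a sequence in Lip_b(X): weak-* convergent sequences are norm
  bounded (uniform boundedness), so by the standing fact this is bounded + pointwise.\<close>
definition lip_seq_wstar :: "(nat \<Rightarrow> 'a::metric_space \<Rightarrow> real) \<Rightarrow> ('a \<Rightarrow> real) \<Rightarrow> bool" where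
  "lip_seq_wstar fs f \<longleftrightarrow> (\<forall>i. fs i \<in> lipb) \<and> f \<in> lipb \<and> (\<exists>B. \<forall>i. lip_norm (fs i) \<le> B) \<and>
     (\<forall>x. (\<lambda>i. fs i x) \<longlonglongrightarrow> f x)"

definition seq_wstar_continuous :: "'a::metric_space measure \<Rightarrow> (('a \<Rightarrow> real) \<Rightarrow> ('a \<Rightarrow> real)) \<Rightarrow> bool" where
  "seq_wstar_continuous M \<delta> \<longleftrightarrow>
     (\<forall>fs f. lip_seq_wstar fs f \<longrightarrow> linf_wstar M (\<lambda>i. \<delta> (fs i)) (\<delta> f) sequentially)"

definition bounded_op :: "'a::metric_space measure \<Rightarrow> (('a \<Rightarrow> real) \<Rightarrow> ('a \<Rightarrow> real)) \<Rightarrow> bool" where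
  "bounded_op M \<delta> \<longleftrightarrow> (\<exists>C. \<forall>f\<in>lipb. AE x in M. \<bar>\<delta> f x\<bar> \<le> C * lip_norm f)"

end

theory Submission
  imports Defs
begin

text \<open>Restricting bounded nets to sequences shows that a derivation is sequentially weak-*
  continuous, and sequential continuity alone already bounds \<open>\<delta>\<close>: if \<open>|\<integral> \<delta> f\<^sub>n h| > (n + 1)\<^sup>2\<close> on
  the Lipschitz unit ball, then \<open>f\<^sub>n / (n + 1)\<close> is weak-* null with unbounded pairings, so the image
  of the unit ball is weak-* bounded in \<open>L\<^sup>\<infinity> = (L\<^sup>1)\<^sup>*\<close>, hence norm bounded by the uniform
  boundedness principle (proved by a gliding hump). Conversely, on a separable space a bounded
  net along which \<open>\<integral> \<delta> g h\<close> stays away from its limit yields a sequence with the same defect that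
  converges on a countable dense set; being equi-Lipschitz it converges everywhere, contradicting
  sequential continuity.\<close>

lemma lipbE:
  assumes "f \<in> lipb"
  obtains C where "0 \<le> C" "\<And>x y. \<bar>f x - f y\<bar> \<le> C * dist x y" "\<And>x. \<bar>f x\<bar> \<le> C"
proof -
  obtain L where L: "\<And>x y. \<bar>f x - f y\<bar> \<le> L * dist x y" and "bounded (range f)"
    using assms unfolding lipb_def by blast
  then obtain K where K: "\<And>x. \<bar>f x\<bar> \<le> K"
    unfolding bounded_iff by auto
  show thesis
  proof (rule that[of "max \<bar>L\<bar> K"])
    show "\<bar>f x - f y\<bar> \<le> max \<bar>L\<bar> K * dist x y" for x y
      by (rule order_trans[OF L[of x y] mult_right_mono]) auto
  qed (use K[of undefined] K in \<open>auto simp: le_max_iff_disj\<close>)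
qed

lemma lipb_zero: "(\<lambda>_. 0) \<in> lipb"
  unfolding lipb_def by (auto intro!: exI[of _ 0])

lemma lipb_cmult:
  assumes "f \<in> lipb"
  shows "(\<lambda>x. c * f x) \<in> lipb"
proof -
  obtain C where C: "\<And>x y. \<bar>f x - f y\<bar> \<le> C * dist x y" "\<And>x. \<bar>f x\<bar> \<le> C"
    using lipbE[OF assms] by metis
  have "\<bar>c * f x - c * f y\<bar> \<le> (\<bar>c\<bar> * C) * dist x y" for x y
    using mult_left_mono[OF C(1)[of x y], of "\<bar>c\<bar>"]
    by (simp add: abs_mult mult.assoc flip: right_diff_distrib)
  moreover have "bounded (range (\<lambda>x. c * f x))"
    unfolding bounded_iff using C(2)
    by (auto simp: abs_mult intro!: exI[of _ "\<bar>c\<bar> * C"] mult_left_mono)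
  ultimately show ?thesis
    unfolding lipb_def by blast
qed

lemma bdd_above_lip_quotients:
  assumes "f \<in> lipb"
  shows "bdd_above ({0} \<union> {\<bar>f x - f y\<bar> / dist x y | x y. x \<noteq> y})"
proof -
  obtain C where C: "0 \<le> C" "\<And>x y. \<bar>f x - f y\<bar> \<le> C * dist x y"
    using lipbE[OF assms] by metis
  have "\<bar>f x - f y\<bar> / dist x y \<le> C" if "x \<noteq> y" for x y
    using C(2)[of x y] that by (simp add: pos_divide_le_eq)
  then show ?thesis
    using C(1) by (intro bdd_aboveI[of _ C]) auto
qed

lemma lip_const_nonneg: "f \<in> lipb \<Longrightarrow> 0 \<le> lip_const f"
  unfolding lip_const_def by (rule cSup_upper[OF _ bdd_above_lip_quotients]) auto

lemma lipschitz_lip_const: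
  assumes "f \<in> lipb"
  shows "\<bar>f x - f y\<bar> \<le> lip_const f * dist x y"
proof (cases "x = y")
  case False
  have "\<bar>f x - f y\<bar> / dist x y \<le> lip_const f"
    unfolding lip_const_def using False
    by (intro cSup_upper[OF _ bdd_above_lip_quotients[OF assms]]) auto
  then show ?thesis
    using False by (simp add: divide_le_eq)
qed simp

lemma lip_norm_nonneg: "f \<in> lipb \<Longrightarrow> 0 \<le> lip_norm f"
  using lip_const_nonneg[of f] unfolding lip_norm_def by linarith

lemma lipschitz_lip_norm:
  assumes "f \<in> lipb"
  shows "\<bar>f x - f y\<bar> \<le> lip_norm f * dist x y"
proof -
  have "lip_const f * dist x y \<le> lip_norm f * dist x y"
    unfolding lip_norm_def by (intro mult_right_mono) auto
  with lipschitz_lip_const[OF assms] show ?thesis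
    by (rule order_trans)
qed

lemma abs_le_lip_norm:
  assumes "f \<in> lipb"
  shows "\<bar>f x\<bar> \<le> lip_norm f"
proof -
  obtain C where "\<And>x. \<bar>f x\<bar> \<le> C"
    using lipbE[OF assms] by metis
  then have "\<bar>f x\<bar> \<le> (SUP x. \<bar>f x\<bar>)"
    by (intro cSUP_upper bdd_aboveI2) auto
  then show ?thesis
    unfolding lip_norm_def by linarith
qed

lemma lip_norm_cmult_le:
  assumes f: "f \<in> lipb" and c: "0 \<le> c"
  shows "lip_norm (\<lambda>x. c * f x) \<le> c * lip_norm f"
proof -
  have "(SUP x. \<bar>c * f x\<bar>) \<le> c * lip_norm f"
    by (rule cSUP_least) (auto simp: abs_mult c intro!: mult_left_mono abs_le_lip_norm[OF f])
  moreover have "lip_const (\<lambda>x. c * f x) \<le> c * lip_norm f"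
    unfolding lip_const_def
  proof (rule cSup_least)
    fix z assume "z \<in> {0} \<union> {\<bar>c * f x - c * f y\<bar> / dist x y | x y. x \<noteq> y}"
    then consider "z = 0" | x y where "z = \<bar>c * f x - c * f y\<bar> / dist x y" "x \<noteq> y"
      by blast
    then show "z \<le> c * lip_norm f"
    proof cases
      case 1
      then show ?thesis using c lip_norm_nonneg[OF f] by simp
    next
      case (2 x y)
      have "\<bar>c * f x - c * f y\<bar> = c * \<bar>f x - f y\<bar>"
        using c by (simp add: abs_mult flip: right_diff_distrib)
      also have "\<dots> \<le> c * (lip_norm f * dist x y)"
        by (intro mult_left_mono lipschitz_lip_norm[OF f] c)
      finally show ?thesis
        using 2 by (simp add: divide_le_eq mult.assoc)
    qed
  qed auto
  ultimately show ?thesis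
    unfolding lip_norm_def by simp
qed

lemma linf_linear_opD:
  assumes "linf_linear_op M \<delta>" "f \<in> lipb"
  shows linf_linear_op_measurable: "\<delta> f \<in> borel_measurable M"
    and linf_linear_op_AE_bounded: "\<exists>B. AE x in M. \<bar>\<delta> f x\<bar> \<le> B"
  using assms unfolding linf_linear_op_def linf_def by auto

lemma linf_linear_op_cmult:
  assumes "linf_linear_op M \<delta>" "f \<in> lipb"
  shows "AE x in M. \<delta> (\<lambda>y. c * f y) x = c * \<delta> f x"
proof -
  have "\<forall>f\<in>lipb. \<forall>g\<in>lipb. \<forall>a b::real.
      AE x in M. \<delta> (\<lambda>y. a * f y + b * g y) x = a * \<delta> f x + b * \<delta> g x"
    using assms(1) unfolding linf_linear_op_def by blast
  from this[rule_format, OF assms(2) assms(2), of c 0] show ?thesis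
    by simp
qed

lemma linf_linear_op_zero:
  assumes "linf_linear_op M \<delta>"
  shows "AE x in M. \<delta> (\<lambda>_. 0) x = 0"
  using linf_linear_op_cmult[OF assms lipb_zero, of 0] by simp

lemma AE_summable_norm_if_summable_integral_norm:
  fixes f :: "nat \<Rightarrow> 'a \<Rightarrow> real"
  assumes int: "\<And>i. integrable M (f i)"
    and sums: "summable (\<lambda>i. \<integral>x. norm (f i x) \<partial>M)"
  shows "AE x in M. summable (\<lambda>i. norm (f i x))"
proof -
  have [measurable]: "\<And>i. f i \<in> borel_measurable M"
    using int by auto
  have "(\<integral>\<^sup>+ x. (\<Sum>i. ennreal (norm (f i x))) \<partial>M) = (\<Sum>i. \<integral>\<^sup>+ x. norm (f i x) \<partial>M)"
    by (intro nn_integral_suminf) auto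
  also have "\<dots> = (\<Sum>i. ennreal (\<integral>x. norm (f i x) \<partial>M))"
    by (intro arg_cong[where f=suminf] ext nn_integral_eq_integral integrable_norm int) auto
  also have "\<dots> \<noteq> \<infinity>"
    using ennreal_suminf_neq_top[OF sums integral_nonneg_AE[OF AE_I2[OF norm_ge_zero]]] by simp
  finally have "AE x in M. (\<Sum>i. ennreal (norm (f i x))) \<noteq> \<infinity>"
    by (intro nn_integral_PInf_AE) auto
  then show ?thesis
    by eventually_elim (auto intro: summable_suminf_not_top)
qed

lemma
  fixes u g :: "'a \<Rightarrow> real"
  assumes g: "integrable M g" and u[measurable]: "u \<in> borel_measurable M"
    and B: "AE x in M. \<bar>u x\<bar> \<le> B"
  shows integrable_mult_AE_bounded: "integrable M (\<lambda>x. u x * g x)"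
    and abs_integral_mult_AE_bounded_le: "\<bar>\<integral>x. u x * g x \<partial>M\<bar> \<le> \<bar>B\<bar> * (\<integral>x. \<bar>g x\<bar> \<partial>M)"
proof -
  have [measurable]: "g \<in> borel_measurable M"
    using g by auto
  have ae: "AE x in M. \<bar>u x * g x\<bar> \<le> \<bar>B\<bar> * \<bar>g x\<bar>"
    using B by eventually_elim (auto simp: abs_mult intro: mult_right_mono)
  show i: "integrable M (\<lambda>x. u x * g x)"
    by (rule Bochner_Integration.integrable_bound[OF integrable_mult_right[OF integrable_abs[OF g]]])
      (use ae in \<open>auto simp: abs_mult\<close>)
  have "\<bar>\<integral>x. u x * g x \<partial>M\<bar> \<le> (\<integral>x. \<bar>u x * g x\<bar> \<partial>M)"
    using integral_norm_bound[of M "\<lambda>x. u x * g x"] by simp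
  also have "\<dots> \<le> (\<integral>x. \<bar>B\<bar> * \<bar>g x\<bar> \<partial>M)"
    by (intro integral_mono_AE ae integrable_abs i integrable_mult_right g)
  finally show "\<bar>\<integral>x. u x * g x \<partial>M\<bar> \<le> \<bar>B\<bar> * (\<integral>x. \<bar>g x\<bar> \<partial>M)"
    by simp
qed

lemma
  fixes g :: "nat \<Rightarrow> 'a \<Rightarrow> real"
  assumes u[measurable]: "u \<in> borel_measurable M" and B: "AE x in M. \<bar>u x\<bar> \<le> B"
    and g: "\<And>i. integrable M (g i)" and sum: "summable (\<lambda>i. \<integral>x. \<bar>g i x\<bar> \<partial>M)"
  shows summable_integral_mult_suminf: "summable (\<lambda>i. \<integral>x. u x * g i x \<partial>M)"
    and integral_mult_suminf: "(\<integral>x. u x * (\<Sum>i. g i x) \<partial>M) = (\<Sum>i. \<integral>x. u x * g i x \<partial>M)"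
proof -
  define f where "f i x = u x * g i x" for i x
  have f: "integrable M (f i)" for i
    unfolding f_def by (rule integrable_mult_AE_bounded[OF g u B])
  have "(\<integral>x. \<bar>f i x\<bar> \<partial>M) \<le> \<bar>B\<bar> * (\<integral>x. \<bar>g i x\<bar> \<partial>M)" for i
    using abs_integral_mult_AE_bounded_le[OF integrable_abs[OF g], of "\<lambda>x. \<bar>u x\<bar>" B] B
    by (simp add: f_def abs_mult)
  then have fsum: "summable (\<lambda>i. \<integral>x. norm (f i x) \<partial>M)"
    by (intro summable_comparison_test'[OF summable_mult[OF sum, of "\<bar>B\<bar>"], of 0]) auto
  have gsum: "summable (\<lambda>i. \<integral>x. norm (g i x) \<partial>M)"
    using sum by simp
  note f_ae = AE_summable_norm_if_summable_integral_norm[OF f fsum]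
  show "summable (\<lambda>i. \<integral>x. u x * g i x \<partial>M)"
    using summable_integral[OF f f_ae fsum] by (simp add: f_def)
  have "(\<integral>x. u x * (\<Sum>i. g i x) \<partial>M) = (\<integral>x. (\<Sum>i. f i x) \<partial>M)"
  proof (rule integral_cong_AE)
    show "(\<lambda>x. u x * (\<Sum>i. g i x)) \<in> borel_measurable M"
      using integrable_suminf[OF g AE_summable_norm_if_summable_integral_norm[OF g gsum] gsum]
      by measurable
    show "(\<lambda>x. \<Sum>i. f i x) \<in> borel_measurable M"
      using integrable_suminf[OF f f_ae fsum] by auto
    show "AE x in M. u x * (\<Sum>i. g i x) = (\<Sum>i. f i x)"
      using AE_summable_norm_if_summable_integral_norm[OF g gsum]
      by eventually_elim (simp add: f_def suminf_mult summable_norm_cancel)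
  qed
  also have "\<dots> = (\<Sum>i. \<integral>x. f i x \<partial>M)"
    by (rule integral_suminf[OF f f_ae fsum])
  finally show "(\<integral>x. u x * (\<Sum>i. g i x) \<partial>M) = (\<Sum>i. \<integral>x. u x * g i x \<partial>M)"
    by (simp add: f_def)
qed

lemma (in sigma_finite_measure) obtain_positive_finite_measure_subset:
  assumes "E \<in> sets M" "E \<notin> null_sets M"
  obtains G where "G \<in> sets M" "G \<subseteq> E" "0 < measure M G"
proof (cases "emeasure M E = \<infinity>")
  case True
  then obtain G where "G \<in> sets M" "G \<subseteq> E" "emeasure M G < \<infinity>" "0 < emeasure M G"
    using approx_PInf_emeasure_with_finite[OF assms(1), of 0] by auto
  then show thesis
    by (intro that[of G]) (auto simp: measure_def enn2real_positive_iff)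
next
  case False
  then show thesis
    using assms by (intro that[of E]) (auto simp: measure_def enn2real_positive_iff less_top zero_less_iff_neq_zero)
qed

text \<open>The witness is the normalised indicator of a finite-measure piece of \<open>{|u| > C}\<close>,
  times the sign of \<open>u\<close>.\<close>
lemma (in sigma_finite_measure) L1_unit_pairing_ge:
  fixes u :: "'a \<Rightarrow> real"
  assumes u[measurable]: "u \<in> borel_measurable M" and B: "AE x in M. \<bar>u x\<bar> \<le> B"
    and large: "\<not> (AE x in M. \<bar>u x\<bar> \<le> C)"
  obtains h where "integrable M h" "(\<integral>x. \<bar>h x\<bar> \<partial>M) \<le> 1" "C \<le> (\<integral>x. u x * h x \<partial>M)"
proof -
  define E where "E = {x\<in>space M. C < \<bar>u x\<bar>}"
  have E: "E \<in> sets M"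
    unfolding E_def by measurable
  have "E \<notin> null_sets M"
  proof
    assume "E \<in> null_sets M"
    then have "AE x in M. \<bar>u x\<bar> \<le> C"
      by (rule AE_I') (auto simp: E_def)
    with large show False ..
  qed
  then obtain G where G[measurable]: "G \<in> sets M" "G \<subseteq> E" and m: "0 < measure M G"
    using obtain_positive_finite_measure_subset[OF E] by blast
  have "emeasure M G < \<infinity>"
    using m measure_zero_top[of M G] by (auto simp: less_top[symmetric])
  then have ind: "integrable M (\<lambda>x. indicator G x / measure M G)"
    by (intro integrable_divide_zero integrable_real_indicator G)
  define h where "h x = indicator G x * sgn (u x) / measure M G" for x
  have h_le: "\<bar>h x\<bar> \<le> indicator G x / measure M G" for x
    unfolding h_def using m by (auto simp: indicator_def abs_mult abs_sgn_eq)
  have [measurable]: "h \<in> borel_measurable M"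
    unfolding h_def by measurable
  have h: "integrable M h"
    by (rule Bochner_Integration.integrable_bound[OF ind]) (use h_le m in auto)
  have "(\<integral>x. \<bar>h x\<bar> \<partial>M) \<le> (\<integral>x. indicator G x / measure M G \<partial>M)"
    by (intro integral_mono h ind integrable_abs h_le)
  also have "\<dots> = 1"
    using m by simp
  finally have "(\<integral>x. \<bar>h x\<bar> \<partial>M) \<le> 1" .
  moreover have "C \<le> (\<integral>x. u x * h x \<partial>M)"
  proof -
    have "C * indicator G x / measure M G \<le> u x * h x" for x
    proof (cases "x \<in> G")
      case True
      then have "C \<le> u x * sgn (u x)"
        using G(2) by (auto simp: E_def sgn_if)
      then show ?thesis
        using True m by (simp add: h_def divide_right_mono mult.assoc[symmetric])
    qed (simp add: h_def)
    then have "(\<integral>x. C * indicator G x / measure M G \<partial>M) \<le> (\<integral>x. u x * h x \<partial>M)"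
      using integrable_mult_AE_bounded[OF h u B] ind
      by (intro integral_mono) (auto simp: times_divide_eq_right[symmetric] simp del: times_divide_eq_right)
    also have "(\<integral>x. C * indicator G x / measure M G \<partial>M) = C"
      using m by simp
    finally show ?thesis .
  qed
  ultimately show thesis
    using h that by blast
qed

lemma suminf_ge_of_dominant_term:
  fixes a :: "nat \<Rightarrow> real"
  assumes a: "summable a" and tail: "\<And>i. j < i \<Longrightarrow> \<bar>a i\<bar> \<le> (1/2) ^ Suc i"
    and dominant: "(\<Sum>i<j. \<bar>a i\<bar>) + t \<le> a j"
  shows "t - 1 \<le> suminf a"
proof -
  have a_tail: "summable (\<lambda>n. a (n + Suc j))"
    by (rule summable_ignore_initial_segment[OF a])
  have "(\<Sum>n. - ((1/2::real) ^ Suc n)) \<le> (\<Sum>n. a (n + Suc j))"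
  proof (rule suminf_le)
    show "- ((1/2) ^ Suc n) \<le> a (n + Suc j)" for n
      using tail[of "n + Suc j"] power_decreasing[of "Suc n" "Suc (n + Suc j)" "1/2::real"]
      by simp
  qed (use summable_minus[OF sums_summable[OF power_half_series]] a_tail in auto)
  then have "-1 \<le> (\<Sum>n. a (n + Suc j))"
    using suminf_minus[OF sums_summable[OF power_half_series]] sums_unique[OF power_half_series]
    by simp
  moreover have "- (\<Sum>i<j. \<bar>a i\<bar>) \<le> (\<Sum>i<j. a i)"
    using sum_abs[of a "{..<j}"] by linarith
  ultimately show ?thesis
    using suminf_split_initial_segment[OF a, of "Suc j"] dominant by simp
qed

text \<open>The weight \<open>e j\<close> is chosen so small that the \<open>j\<close>-th bump cannot be spoilt by any earlier
  \<open>u i\<close>, and the pairing of \<open>u j\<close> with the \<open>j\<close>-th bump is chosen so large that it dominates all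
  earlier bumps together.\<close>
lemma gliding_hump_sequence:
  fixes pair :: "'u \<Rightarrow> 'h \<Rightarrow> real" and Bd :: "'u \<Rightarrow> real" and Kd :: "'h \<Rightarrow> real"
  assumes large: "\<And>C. \<exists>u h. P u h \<and> C \<le> pair u h"
  obtains u h e where "\<And>j. P (u j) (h j)" "\<And>j. 0 < e j" "\<And>j. e j \<le> (1/2) ^ Suc j"
    "\<And>i j. j < i \<Longrightarrow> e i * \<bar>Bd (u j)\<bar> \<le> (1/2) ^ Suc i"
    "\<And>j. real j + 1 + (\<Sum>i<j. e i * \<bar>Kd (h i)\<bar>) \<le> e j * pair (u j) (h j)"
proof -
  have "\<forall>C. \<exists>p. P (fst p) (snd p) \<and> C \<le> pair (fst p) (snd p)"
    using large by auto
  then obtain sel where sel: "\<And>C. P (fst (sel C)) (snd (sel C))" "\<And>C. C \<le> pair (fst (sel C)) (snd (sel C))"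
    by metis
  define wt where "wt j b = (1/2) ^ Suc j / (1 + b)" for j :: nat and b :: real
  define pick where "pick j s = sel ((real j + 1 + fst s) / wt j (snd s))" for j s
  define st where "st = rec_nat (0, 0) (\<lambda>j s.
    (fst s + wt j (snd s) * \<bar>Kd (snd (pick j s))\<bar>, snd s + \<bar>Bd (fst (pick j s))\<bar>))"
  define e where "e j = wt j (snd (st j))" for j
  define u where "u j = fst (pick j (st j))" for j
  define h where "h j = snd (pick j (st j))" for j
  have fst_st: "fst (st j) = (\<Sum>i<j. e i * \<bar>Kd (h i)\<bar>)" for j
    by (induction j) (simp_all add: st_def e_def h_def)
  have snd_st: "snd (st j) = (\<Sum>i<j. \<bar>Bd (u i)\<bar>)" for j
    by (induction j) (simp_all add: st_def u_def)
  have snd_st_nonneg: "0 \<le> snd (st j)" for j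
    unfolding snd_st by (simp add: sum_nonneg)
  have e_eq: "e j * (1 + snd (st j)) = (1/2) ^ Suc j" for j
    using snd_st_nonneg[of j] by (simp add: e_def wt_def del: power_Suc)
  have e_pos: "0 < e j" for j
    using snd_st_nonneg[of j] by (simp add: e_def wt_def)
  show thesis
  proof (rule that)
    show "P (u j) (h j)" for j
      unfolding u_def h_def pick_def by (rule sel)
    show "0 < e j" for j
      by (rule e_pos)
    show "e j \<le> (1/2) ^ Suc j" for j
      using mult_left_mono[of 1 "1 + snd (st j)" "e j"] e_eq[of j] e_pos[of j] snd_st_nonneg[of j]
      by simp
    show "e i * \<bar>Bd (u j)\<bar> \<le> (1/2) ^ Suc i" if "j < i" for i j
    proof -
      have "\<bar>Bd (u j)\<bar> \<le> snd (st i)"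
        unfolding snd_st using that by (intro member_le_sum) auto
      then have "e i * \<bar>Bd (u j)\<bar> \<le> e i * (1 + snd (st i))"
        using e_pos[of i] by (intro mult_left_mono) auto
      then show ?thesis
        by (simp add: e_eq)
    qed
    show "real j + 1 + (\<Sum>i<j. e i * \<bar>Kd (h i)\<bar>) \<le> e j * pair (u j) (h j)" for j
    proof -
      have "(real j + 1 + fst (st j)) / e j \<le> pair (u j) (h j)"
        unfolding u_def h_def pick_def e_def by (rule sel(2))
      then show ?thesis
        using e_pos[of j] by (simp add: fst_st pos_divide_le_eq mult_ac)
    qed
  qed
qed

lemma summable_integral_abs_weighted:
  fixes hh :: "nat \<Rightarrow> 'a \<Rightarrow> real"
  assumes hh: "\<And>i. (\<integral>x. \<bar>hh i x\<bar> \<partial>M) \<le> 1" and e: "\<And>i. 0 \<le> e i" "\<And>i. e i \<le> (1/2) ^ Suc i"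
  shows "summable (\<lambda>i. \<integral>x. \<bar>e i * hh i x\<bar> \<partial>M)"
proof (rule summable_comparison_test'[OF sums_summable[OF power_half_series], of 0])
  fix i
  have "(\<integral>x. \<bar>e i * hh i x\<bar> \<partial>M) \<le> e i"
    using mult_left_mono[OF hh e(1)] by (simp add: abs_mult e(1))
  then show "norm (\<integral>x. \<bar>e i * hh i x\<bar> \<partial>M) \<le> (1/2) ^ Suc i"
    using e(2)[of i] by simp
qed

lemma integral_mult_weighted_series_ge:
  fixes u :: "'a \<Rightarrow> real" and hh :: "nat \<Rightarrow> 'a \<Rightarrow> real"
  assumes u: "u \<in> borel_measurable M" "AE x in M. \<bar>u x\<bar> \<le> B"
    and hh: "\<And>i. integrable M (hh i)" "\<And>i. (\<integral>x. \<bar>hh i x\<bar> \<partial>M) \<le> 1"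
    and e: "\<And>i. 0 < e i" "\<And>i. e i \<le> (1/2) ^ Suc i" "\<And>i. j < i \<Longrightarrow> e i * \<bar>B\<bar> \<le> (1/2) ^ Suc i"
    and dominant: "(\<Sum>i<j. e i * \<bar>\<integral>x. u x * hh i x \<partial>M\<bar>) + t \<le> e j * (\<integral>x. u x * hh j x \<partial>M)"
  shows "t - 1 \<le> (\<integral>x. u x * (\<Sum>i. e i * hh i x) \<partial>M)"
proof -
  define g where "g i x = e i * hh i x" for i x
  have g: "integrable M (g i)" for i
    unfolding g_def by (intro integrable_mult_right hh)
  have g_sum: "summable (\<lambda>i. \<integral>x. \<bar>g i x\<bar> \<partial>M)"
    unfolding g_def by (rule summable_integral_abs_weighted[OF hh(2) less_imp_le[OF e(1)] e(2)])
  define a where "a i = (\<integral>x. u x * g i x \<partial>M)" for i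
  have a_eq: "a i = e i * (\<integral>x. u x * hh i x \<partial>M)" for i
    by (simp add: a_def g_def mult.left_commute)
  have "\<bar>a i\<bar> \<le> (1/2) ^ Suc i" if "j < i" for i
  proof -
    have "\<bar>a i\<bar> \<le> \<bar>B\<bar> * (\<integral>x. \<bar>g i x\<bar> \<partial>M)"
      unfolding a_def by (rule abs_integral_mult_AE_bounded_le[OF g u])
    also have "\<dots> \<le> \<bar>B\<bar> * e i"
      using mult_left_mono[OF hh(2) less_imp_le[OF e(1)], of i] e(1)[of i]
      by (intro mult_left_mono) (auto simp: g_def abs_mult)
    finally show ?thesis
      using e(3)[OF that] by (simp add: mult.commute)
  qed
  moreover have "(\<Sum>i<j. \<bar>a i\<bar>) + t \<le> a j"
    using dominant e(1) by (simp add: a_eq abs_mult abs_of_pos)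
  moreover have "summable a"
    unfolding a_def by (rule summable_integral_mult_suminf[OF u g g_sum])
  ultimately have "t - 1 \<le> suminf a"
    by (rule suminf_ge_of_dominant_term[rotated])
  then show ?thesis
    unfolding a_def g_def[symmetric] integral_mult_suminf[OF u g g_sum] .
qed

text \<open>If the bound failed, the test function \<open>\<Sum>i. e i * hh i\<close> built from a gliding hump
  sequence would pair with the \<open>j\<close>-th hump function to at least \<open>j\<close>.\<close>
lemma linf_uniform_boundedness:
  fixes S :: "('a \<Rightarrow> real) set"
  assumes "sigma_finite_measure M"
    and meas: "\<And>u. u \<in> S \<Longrightarrow> u \<in> borel_measurable M"
    and bdd: "\<And>u. u \<in> S \<Longrightarrow> \<exists>B. AE x in M. \<bar>u x\<bar> \<le> B"
    and weak_bdd: "\<And>h. integrable M h \<Longrightarrow> \<exists>K. \<forall>u\<in>S. \<bar>\<integral>x. u x * h x \<partial>M\<bar> \<le> K"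
  shows "\<exists>C. \<forall>u\<in>S. AE x in M. \<bar>u x\<bar> \<le> C"
proof (rule ccontr)
  assume unbdd: "\<not> ?thesis"
  obtain Bd where Bd: "\<And>u. u \<in> S \<Longrightarrow> AE x in M. \<bar>u x\<bar> \<le> Bd u"
    using bdd by metis
  obtain Kd where Kd: "\<And>h u. integrable M h \<Longrightarrow> u \<in> S \<Longrightarrow> \<bar>\<integral>x. u x * h x \<partial>M\<bar> \<le> Kd h"
    using weak_bdd by metis
  have "\<exists>u h. (u \<in> S \<and> integrable M h \<and> (\<integral>x. \<bar>h x\<bar> \<partial>M) \<le> 1) \<and> C \<le> (\<integral>x. u x * h x \<partial>M)" for C
  proof -
    obtain u where u: "u \<in> S" "\<not> (AE x in M. \<bar>u x\<bar> \<le> C)"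
      using unbdd by blast
    then obtain h where "integrable M h" "(\<integral>x. \<bar>h x\<bar> \<partial>M) \<le> 1" "C \<le> (\<integral>x. u x * h x \<partial>M)"
      using sigma_finite_measure.L1_unit_pairing_ge[OF assms(1) meas Bd] by blast
    with u show ?thesis
      by blast
  qed
  then obtain u hh e where uh: "\<And>j. u j \<in> S" "\<And>j. integrable M (hh j)" "\<And>j. (\<integral>x. \<bar>hh j x\<bar> \<partial>M) \<le> 1"
    and e: "\<And>j. 0 < e j" "\<And>j. e j \<le> (1/2) ^ Suc j"
    and hump: "\<And>i j. j < i \<Longrightarrow> e i * \<bar>Bd (u j)\<bar> \<le> (1/2) ^ Suc i"
    and dominant: "\<And>j. real j + 1 + (\<Sum>i<j. e i * \<bar>Kd (hh i)\<bar>) \<le> e j * (\<integral>x. u j x * hh j x \<partial>M)"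
    by (rule gliding_hump_sequence[where Bd=Bd and Kd=Kd]) blast
  define h where "h x = (\<Sum>i. e i * hh i x)" for x
  have "integrable M h"
    using summable_integral_abs_weighted[OF uh(3) less_imp_le[OF e(1)] e(2)] uh(2)
    unfolding h_def
    by (intro integrable_suminf AE_summable_norm_if_summable_integral_norm integrable_mult_right) auto
  then obtain K where K: "\<And>j. \<bar>\<integral>x. u j x * h x \<partial>M\<bar> \<le> K"
    using Kd uh(1) by blast
  have "real j \<le> (\<integral>x. u j x * h x \<partial>M)" for j
  proof -
    have "e i * \<bar>\<integral>x. u j x * hh i x \<partial>M\<bar> \<le> e i * \<bar>Kd (hh i)\<bar>" for i
      using Kd[OF uh(2)[of i] uh(1)[of j]] e(1)[of i] by (intro mult_left_mono) auto
    then have "(\<Sum>i<j. e i * \<bar>\<integral>x. u j x * hh i x \<partial>M\<bar>) + (real j + 1) \<le> e j * (\<integral>x. u j x * hh j x \<partial>M)"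
      using dominant[of j] sum_mono[of "{..<j}"] by (smt (verit))
    then have "real j + 1 - 1 \<le> (\<integral>x. u j x * h x \<partial>M)"
      unfolding h_def
      by (intro integral_mult_weighted_series_ge[where B="Bd (u j)"]) (use meas Bd uh e hump in auto)
    then show ?thesis
      by simp
  qed
  moreover obtain j :: nat where "K < real j"
    using reals_Archimedean2 by blast
  ultimately show False
    using K[of j] by (meson abs_ge_self less_le_trans not_le)
qed

lemma seq_wstar_continuous_if_derivation:
  fixes \<delta> :: "('a::metric_space \<Rightarrow> real) \<Rightarrow> ('a \<Rightarrow> real)"
  assumes "derivation M \<delta>"
  shows "seq_wstar_continuous M \<delta>"
  unfolding seq_wstar_continuous_def
proof (intro allI impI)
  fix fs :: "nat \<Rightarrow> 'a \<Rightarrow> real" and f assume "lip_seq_wstar fs f"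
  then have "lip_bounded_wstar (filtermap fs sequentially) f"
    unfolding lip_seq_wstar_def lip_bounded_wstar_def
    by (auto simp: eventually_filtermap filterlim_filtermap intro: always_eventually)
  then have "linf_wstar M \<delta> (\<delta> f) (filtermap fs sequentially)"
    using assms unfolding derivation_def by blast
  then show "linf_wstar M (\<lambda>i. \<delta> (fs i)) (\<delta> f) sequentially"
    unfolding linf_wstar_def by (simp add: filterlim_filtermap)
qed

lemma integral_linf_linear_op_cmult:
  assumes lin: "linf_linear_op M \<delta>" and f: "f \<in> lipb" and h: "h \<in> borel_measurable M"
  shows "(\<integral>x. \<delta> (\<lambda>y. c * f y) x * h x \<partial>M) = c * (\<integral>x. \<delta> f x * h x \<partial>M)"
proof -
  have "(\<integral>x. \<delta> (\<lambda>y. c * f y) x * h x \<partial>M) = (\<integral>x. c * (\<delta> f x * h x) \<partial>M)"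
    using linf_linear_op_cmult[OF lin f, of c]
      linf_linear_op_measurable[OF lin f] linf_linear_op_measurable[OF lin lipb_cmult[OF f]] h
    by (intro integral_cong_AE) auto
  then show ?thesis
    by simp
qed

lemma lip_seq_wstar_shrinking_unit_ball:
  assumes fs: "\<And>n. fs n \<in> lipb" "\<And>n. lip_norm (fs n) \<le> 1"
  shows "lip_seq_wstar (\<lambda>n x. 1 / (real n + 1) * fs n x) (\<lambda>_. 0)"
  unfolding lip_seq_wstar_def
proof (intro conjI allI exI)
  show "(\<lambda>x. 1 / (real n + 1) * fs n x) \<in> lipb" for n
    by (rule lipb_cmult[OF fs(1)])
  show "lip_norm (\<lambda>x. 1 / (real n + 1) * fs n x) \<le> 1" for n
  proof -
    have "lip_norm (\<lambda>x. 1 / (real n + 1) * fs n x) \<le> 1 / (real n + 1) * lip_norm (fs n)"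
      by (rule lip_norm_cmult_le[OF fs(1)]) simp
    also have "\<dots> \<le> 1 * 1"
      using fs(2)[of n] lip_norm_nonneg[OF fs(1)[of n]] by (intro mult_mono) auto
    finally show ?thesis
      by simp
  qed
  show "(\<lambda>n. 1 / (real n + 1) * fs n x) \<longlonglongrightarrow> 0" for x
  proof (rule Lim_null_comparison[OF _ LIMSEQ_inverse_real_of_nat])
    have "\<bar>fs n x\<bar> \<le> 1" for n
      using abs_le_lip_norm[OF fs(1)] fs(2) order_trans by blast
    then show "\<forall>\<^sub>F n in sequentially. norm (1 / (real n + 1) * fs n x) \<le> inverse (real (Suc n))"
      by (auto simp: abs_mult divide_inverse add.commute intro!: always_eventually mult_left_le)
  qed
qed (rule lipb_zero)

lemma pairing_bounded_on_lip_unit_ball: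
  assumes lin: "linf_linear_op M \<delta>" and sc: "seq_wstar_continuous M \<delta>" and h: "integrable M h"
  shows "\<exists>K. \<forall>f\<in>lipb. lip_norm f \<le> 1 \<longrightarrow> \<bar>\<integral>x. \<delta> f x * h x \<partial>M\<bar> \<le> K"
proof (rule ccontr)
  assume "\<not> ?thesis"
  then have "\<forall>n::nat. \<exists>f. f \<in> lipb \<and> lip_norm f \<le> 1 \<and> (real n + 1)^2 < \<bar>\<integral>x. \<delta> f x * h x \<partial>M\<bar>"
    by (auto simp: not_le)
  then obtain fs where fs: "\<And>n. fs n \<in> lipb" "\<And>n. lip_norm (fs n) \<le> 1"
    and large: "\<And>n. (real n + 1)^2 < \<bar>\<integral>x. \<delta> (fs n) x * h x \<partial>M\<bar>"
    by metis
  have hm: "h \<in> borel_measurable M"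
    using h by auto
  have "(\<lambda>n. \<integral>x. \<delta> (\<lambda>y. 1 / (real n + 1) * fs n y) x * h x \<partial>M) \<longlonglongrightarrow> (\<integral>x. \<delta> (\<lambda>_. 0) x * h x \<partial>M)"
    using sc[unfolded seq_wstar_continuous_def, rule_format, OF lip_seq_wstar_shrinking_unit_ball[OF fs],
        unfolded linf_wstar_def, rule_format, OF h] .
  also have "(\<integral>x. \<delta> (\<lambda>_. 0) x * h x \<partial>M) = 0"
    using integral_linf_linear_op_cmult[OF lin lipb_zero hm, of 0] by simp
  finally have "(\<lambda>n. 1 / (real n + 1) * (\<integral>x. \<delta> (fs n) x * h x \<partial>M)) \<longlonglongrightarrow> 0"
    unfolding integral_linf_linear_op_cmult[OF lin fs(1) hm] .
  from LIMSEQ_D[OF this zero_less_one] obtain n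
    where "norm (1 / (real n + 1) * (\<integral>x. \<delta> (fs n) x * h x \<partial>M) - 0) < 1"
    by blast
  then have "\<bar>\<integral>x. \<delta> (fs n) x * h x \<partial>M\<bar> < real n + 1"
    by (simp add: abs_mult divide_less_eq)
  moreover have "real n + 1 \<le> (real n + 1)^2"
    using mult_right_mono[of 1 "real n + 1" "real n + 1"] by (simp add: power2_eq_square)
  ultimately show False
    using large[of n] by linarith
qed

lemma bounded_op_if_lip_unit_ball_bound:
  fixes \<delta> :: "('a::metric_space \<Rightarrow> real) \<Rightarrow> ('a \<Rightarrow> real)"
  assumes lin: "linf_linear_op M \<delta>"
    and bound: "\<And>f :: 'a \<Rightarrow> real. f \<in> lipb \<Longrightarrow> lip_norm f \<le> 1 \<Longrightarrow> AE x in M. \<bar>\<delta> f x\<bar> \<le> C"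
  shows "bounded_op M \<delta>"
  unfolding bounded_op_def
proof (intro exI ballI)
  fix f :: "'a \<Rightarrow> real" assume f: "f \<in> lipb"
  show "AE x in M. \<bar>\<delta> f x\<bar> \<le> C * lip_norm f"
  proof (cases "lip_norm f = 0")
    case True
    then have "f = (\<lambda>_. 0)"
      using abs_le_lip_norm[OF f] by (intro ext) (metis abs_le_zero_iff)
    then show ?thesis
      using linf_linear_op_zero[OF lin] True by simp
  next
    case False
    define L where "L = lip_norm f"
    have L: "0 < L"
      using False lip_norm_nonneg[OF f] unfolding L_def by linarith
    have "lip_norm (\<lambda>x. 1 / L * f x) \<le> 1 / L * lip_norm f"
      by (rule lip_norm_cmult_le[OF f]) (use L in simp)
    then have "AE x in M. \<bar>\<delta> (\<lambda>y. 1 / L * f y) x\<bar> \<le> C"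
      using L by (intro bound lipb_cmult f) (simp add: L_def)
    with linf_linear_op_cmult[OF lin f, of "1 / L"] show ?thesis
      by eventually_elim (use L in \<open>simp add: L_def abs_mult pos_divide_le_eq\<close>)
  qed
qed

lemma bounded_op_if_seq_wstar_continuous:
  fixes \<delta> :: "('a::metric_space \<Rightarrow> real) \<Rightarrow> ('a \<Rightarrow> real)"
  assumes "sigma_finite_measure M" and lin: "linf_linear_op M \<delta>" and sc: "seq_wstar_continuous M \<delta>"
  shows "bounded_op M \<delta>"
proof -
  define S where "S = \<delta> ` {f \<in> lipb. lip_norm f \<le> 1}"
  have "\<exists>C. \<forall>u\<in>S. AE x in M. \<bar>u x\<bar> \<le> C"
  proof (rule linf_uniform_boundedness[OF assms(1)])
    show "\<exists>K. \<forall>u\<in>S. \<bar>\<integral>x. u x * h x \<partial>M\<bar> \<le> K" if "integrable M h" for h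
      using pairing_bounded_on_lip_unit_ball[OF lin sc that] by (auto simp: S_def)
  qed (auto simp: S_def intro: linf_linear_op_measurable[OF lin] linf_linear_op_AE_bounded[OF lin])
  then obtain C where "\<And>f. f \<in> lipb \<Longrightarrow> lip_norm f \<le> 1 \<Longrightarrow> AE x in M. \<bar>\<delta> f x\<bar> \<le> C"
    by (auto simp: S_def)
  then show ?thesis
    by (rule bounded_op_if_lip_unit_ball_bound[OF lin])
qed

lemma frequently_imp_pointwise_convergent_seq:
  fixes d :: "nat \<Rightarrow> 'a" and f :: "'a \<Rightarrow> 'b::metric_space" and F :: "('a \<Rightarrow> 'b) filter"
  assumes freq: "frequently P F" and lim: "\<And>k. ((\<lambda>g. g (d k)) \<longlongrightarrow> f (d k)) F"
  obtains gs where "\<And>n. P (gs n)" "\<And>k. (\<lambda>n. gs n (d k)) \<longlonglongrightarrow> f (d k)"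
proof -
  have "\<exists>g. P g \<and> (\<forall>k\<in>{..n}. dist (g (d k)) (f (d k)) < 1 / (real n + 1))" for n
  proof -
    have "eventually (\<lambda>g. \<forall>k\<in>{..n}. dist (g (d k)) (f (d k)) < 1 / (real n + 1)) F"
      using lim by (intro eventually_ball_finite) (auto simp: tendsto_iff)
    with freq show ?thesis
      by (intro frequently_ex frequently_eventually_frequently)
  qed
  then obtain gs where P: "\<And>n. P (gs n)"
    and close: "\<And>n k. k \<le> n \<Longrightarrow> dist (gs n (d k)) (f (d k)) < 1 / (real n + 1)"
    by (metis atMost_iff)
  have "(\<lambda>n. gs n (d k)) \<longlonglongrightarrow> f (d k)" for k
  proof (rule tendsto_sandwich[where f="\<lambda>_. 0" and h="\<lambda>n. 1 / (real n + 1)", THEN tendsto_dist_iff[THEN iffD2]])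
    show "\<forall>\<^sub>F n in sequentially. 0 \<le> dist (gs n (d k)) (f (d k))"
      by simp
    show "\<forall>\<^sub>F n in sequentially. dist (gs n (d k)) (f (d k)) \<le> 1 / (real n + 1)"
      using close by (intro eventually_sequentiallyI[of k]) (simp add: less_imp_le)
  qed (use LIMSEQ_inverse_real_of_nat in \<open>simp_all add: divide_inverse add.commute\<close>)
  with P show thesis
    using that by blast
qed

lemma equi_lipschitz_tendsto_if_tendsto_on_dense:
  fixes g :: "nat \<Rightarrow> 'a::metric_space \<Rightarrow> real"
  assumes g: "\<And>n x y. \<bar>g n x - g n y\<bar> \<le> B * dist x y"
    and f: "\<And>x y. \<bar>f x - f y\<bar> \<le> L * dist x y"
    and dense: "closure D = UNIV" and lim: "\<And>y. y \<in> D \<Longrightarrow> (\<lambda>n. g n y) \<longlonglongrightarrow> f y"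
  shows "(\<lambda>n. g n x) \<longlonglongrightarrow> f x"
proof (rule LIMSEQ_I)
  fix r :: real assume r: "0 < r"
  define c where "c = \<bar>B\<bar> + \<bar>L\<bar> + 1"
  have c: "0 < c"
    unfolding c_def by simp
  obtain y where y: "y \<in> D" "dist y x < r / (2 * c)"
    using dense r c closure_approachable[of x D] by (metis UNIV_I divide_pos_pos mult_pos_pos zero_less_numeral)
  obtain N where N: "\<And>n. N \<le> n \<Longrightarrow> norm (g n y - f y) < r / 2"
    using LIMSEQ_D[OF lim[OF y(1)], of "r / 2"] r by auto
  have "\<bar>g n x - f x\<bar> < r" if "N \<le> n" for n
  proof -
    have "\<bar>g n x - g n y\<bar> + \<bar>f y - f x\<bar> \<le> (\<bar>B\<bar> + \<bar>L\<bar>) * dist y x"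
      using g[of n x y] f[of y x] abs_ge_self[of B] abs_ge_self[of L]
        mult_right_mono[of B "\<bar>B\<bar>" "dist y x"] mult_right_mono[of L "\<bar>L\<bar>" "dist y x"]
      by (simp add: dist_commute distrib_right)
    also have "\<dots> \<le> c * dist y x"
      unfolding c_def by (intro mult_right_mono) auto
    also have "\<dots> < r / 2"
      using y(2) c by (simp add: pos_less_divide_eq mult_ac)
    moreover have "\<bar>g n x - f x\<bar> \<le> \<bar>g n x - g n y\<bar> + \<bar>g n y - f y\<bar> + \<bar>f y - f x\<bar>"
      by linarith
    ultimately show ?thesis
      using N[OF that] by simp
  qed
  then show "\<exists>N. \<forall>n\<ge>N. norm (g n x - f x) < r"
    by auto
qed

lemma wstar_continuous_if_seq_wstar_continuous:
  fixes \<delta> :: "('a::metric_space \<Rightarrow> real) \<Rightarrow> ('a \<Rightarrow> real)"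
  assumes sep: "separable_space (euclidean :: 'a topology)" and sc: "seq_wstar_continuous M \<delta>"
    and net: "lip_bounded_wstar F f"
  shows "linf_wstar M \<delta> (\<delta> f) F"
  unfolding linf_wstar_def
proof (intro allI impI)
  fix h :: "'a \<Rightarrow> real" assume h: "integrable M h"
  define \<phi> where "\<phi> g = (\<integral>x. \<delta> g x * h x \<partial>M)" for g
  show "((\<lambda>g. \<integral>x. \<delta> g x * h x \<partial>M) \<longlongrightarrow> (\<integral>x. \<delta> f x * h x \<partial>M)) F"
  proof (rule ccontr)
    assume "\<not> ?thesis"
    then obtain e where "0 < e" and far: "frequently (\<lambda>g. \<not> dist (\<phi> g) (\<phi> f) < e) F"
      unfolding tendsto_iff \<phi>_def frequently_def by auto
    obtain B where B: "eventually (\<lambda>g. g \<in> lipb \<and> lip_norm g \<le> B) F"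
      and f: "f \<in> lipb" and pointwise: "\<And>x. ((\<lambda>g. g x) \<longlongrightarrow> f x) F"
      using net unfolding lip_bounded_wstar_def by blast
    obtain D :: "'a set" where D: "countable D" "closure D = UNIV"
      using sep unfolding separable_space_def by auto
    then have "D \<noteq> {}"
      by auto
    define d where "d = from_nat_into D"
    have range_d: "range d = D"
      unfolding d_def using D(1) \<open>D \<noteq> {}\<close> by simp
    obtain gs where gs: "\<And>n. \<not> dist (\<phi> (gs n)) (\<phi> f) < e \<and> (gs n \<in> lipb \<and> lip_norm (gs n) \<le> B)"
      and gs_lim: "\<And>k. (\<lambda>n. gs n (d k)) \<longlonglongrightarrow> f (d k)"
      using frequently_imp_pointwise_convergent_seq[where d=d, OF frequently_eventually_frequently[OF far B] pointwise]
      by blast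
    have "(\<lambda>n. gs n x) \<longlonglongrightarrow> f x" for x
    proof (rule equi_lipschitz_tendsto_if_tendsto_on_dense[OF _ _ D(2)])
      show "\<bar>gs n x - gs n y\<bar> \<le> B * dist x y" for n x y
        using lipschitz_lip_norm[of "gs n" x y] gs[of n] mult_right_mono[of "lip_norm (gs n)" B "dist x y"]
        by simp
      show "\<bar>f x - f y\<bar> \<le> lip_norm f * dist x y" for x y
        by (rule lipschitz_lip_norm[OF f])
    qed (use gs_lim range_d in blast)
    then have "lip_seq_wstar gs f"
      unfolding lip_seq_wstar_def using gs f by blast
    then have "(\<lambda>n. \<phi> (gs n)) \<longlonglongrightarrow> \<phi> f"
      using sc h unfolding seq_wstar_continuous_def linf_wstar_def \<phi>_def by blast
    then obtain n where "dist (\<phi> (gs n)) (\<phi> f) < e"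
      using \<open>0 < e\<close> by (auto simp: tendsto_iff eventually_sequentially)
    with gs[of n] show False
      by blast
  qed
qed

theorem lemma2p8:
  fixes M :: "'a::metric_space measure"
    and \<delta> :: "('a \<Rightarrow> real) \<Rightarrow> ('a \<Rightarrow> real)"
  assumes "separable_space (euclidean :: 'a topology)"
    and "sets M = sets borel"
    and "sigma_finite_measure M"
    and "linf_linear_op M \<delta>"
  shows "(derivation M \<delta> \<longrightarrow> bounded_op M \<delta>) \<and>
         (derivation M \<delta> \<longleftrightarrow> leibniz M \<delta> \<and> seq_wstar_continuous M \<delta>)"
proof (intro conjI)
  show "derivation M \<delta> \<longrightarrow> bounded_op M \<delta>"
    using bounded_op_if_seq_wstar_continuous[OF assms(3,4)] seq_wstar_continuous_if_derivation
    by blast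
  show "derivation M \<delta> \<longleftrightarrow> leibniz M \<delta> \<and> seq_wstar_continuous M \<delta>"
    using seq_wstar_continuous_if_derivation[of M \<delta>]
      wstar_continuous_if_seq_wstar_continuous[OF assms(1)] assms(4)
    unfolding derivation_def by blast
qed

end
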